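(* For a restricted $(\rho_r,\rho_w)$-AWTP channel (one in which the adversary's read and write sets coincide, $S_r=S_w$), the perfect-secrecy capacity satisfies $\mathsf C^0\le 1-\rho_r-\rho_w$, and for sufficiently small $\epsilon>0$ the $\epsilon$-secrecy capacity satisfies \[ \mathsf C^\epsilon\le 1-\rho_r-\rho_w+2\epsilon\rho_r\Big(1+\log_{|\Sigma|}\frac1\epsilon\Big). \]
   Context: $\Sigma$ finite additive group, $[N]=\{1,\dots,N\}$. $(\rho_r,\rho_w)$-AWTP channel: an adaptive computationally unbounded adversary reads the sent codeword $c\in\Sigma^N$ on a set $S_r$, $|S_r|\le\rho_rN$, and adds an error vector supported in $S_w$, $|S_w|\le\rho_wN$, chosen based on its view; the channel is restricted if additionally $S_r=S_w$ is required. An $(\epsilon,\delta)$-AWTP code: randomized encoder $\mathcal M\to\Sigma^N$, deterministic decoder, adversary views for any two messages at statistical distance $\le\epsilon$, decoding error probability $\le\delta$ against every adversary. Rate $\log|\mathcal M|/(N\log|\Sigma|)$. A family $\{C^N\}$ achieves rate $R$ if for every $\xi>0$ there is $N_0$ such that for $N\ge N_0$ rate $\ge R-\xi$ and error $\le\xi$. $\mathsf C^\epsilon$ is the largest achievable rate among families of $\epsilon$-secure codes for the channel; $\mathsf C^0$ for $\epsilon=0$. *)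

theory Defs
  imports "HOL-Probability.Probability"
begin

text \<open>Codewords in \<Sigma>^N are functions nat => 'a that vanish outside [N] = {1..N}.\<close>
definition words :: "nat \<Rightarrow> (nat \<Rightarrow> 'a::zero) set" where
  "words N = {c. \<forall>i. i \<notin> {1..N} \<longrightarrow> c i = 0}"

definition stat_dist :: "'b pmf \<Rightarrow> 'b pmf \<Rightarrow> real" where
  "stat_dist p q = (SUP A. \<bar>measure_pmf.prob p A - measure_pmf.prob q A\<bar>)"

text \<open>Deterministic adaptive reading: given the view so far (list of (position, value)),
  the strategy picks the next position to read or stops.\<close>
fun adv_run :: "((nat \<times> 'a) list \<Rightarrow> nat option) \<Rightarrow> nat \<Rightarrow> (nat \<Rightarrow> 'a)
                 \<Rightarrow> (nat \<times> 'a) list \<Rightarrow> (nat \<times> 'a) list" where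
  "adv_run rs 0 c v = v"
| "adv_run rs (Suc k) c v =
     (case rs v of None \<Rightarrow> v | Some i \<Rightarrow> adv_run rs k c (v @ [(i, c i)]))"

definition adv_view :: "((nat \<times> 'a) list \<Rightarrow> nat option) \<Rightarrow> nat \<Rightarrow> (nat \<Rightarrow> 'a) \<Rightarrow> (nat \<times> 'a) list" where
  "adv_view rs k c = adv_run rs k c []"

definition read_budget :: "real \<Rightarrow> nat \<Rightarrow> nat" where
  "read_budget \<rho> N = nat \<lfloor>\<rho> * real N\<rfloor>"

text \<open>A code: (number of messages K, message set {..<K}; randomized encoder; deterministic decoder).\<close>
type_synonym 'a awtp_code = "nat \<times> (nat \<Rightarrow> (nat \<Rightarrow> 'a) pmf) \<times> ((nat \<Rightarrow> 'a) \<Rightarrow> nat)"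

definition awtp_valid :: "nat \<Rightarrow> ('a::zero) awtp_code \<Rightarrow> bool" where
  "awtp_valid N C = (case C of (K, enc, dec) \<Rightarrow>
      1 \<le> K \<and> (\<forall>m<K. set_pmf (enc m) \<subseteq> words N))"

definition awtp_secure :: "nat \<Rightarrow> real \<Rightarrow> real \<Rightarrow> ('a::zero) awtp_code \<Rightarrow> bool" where
  "awtp_secure N \<rho>r \<epsilon> C = (case C of (K, enc, dec) \<Rightarrow>
      (\<forall>rs. \<forall>m1<K. \<forall>m2<K.
         stat_dist (map_pmf (adv_view rs (read_budget \<rho>r N)) (enc m1))
                   (map_pmf (adv_view rs (read_budget \<rho>r N)) (enc m2)) \<le> \<epsilon>))"

definition restricted_write :: "nat \<Rightarrow> real \<Rightarrow> ((nat \<times> 'a) list \<Rightarrow> (nat \<Rightarrow> 'a::zero)) \<Rightarrow> bool" where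
  "restricted_write N \<rho>w ew = (\<forall>v.
      {i. ew v i \<noteq> 0} \<subseteq> fst ` set v \<inter> {1..N} \<and>
      real (card {i. ew v i \<noteq> 0}) \<le> \<rho>w * real N)"

definition awtp_reliable :: "nat \<Rightarrow> real \<Rightarrow> real \<Rightarrow> real \<Rightarrow> ('a::{zero,plus}) awtp_code \<Rightarrow> bool" where
  "awtp_reliable N \<rho>r \<rho>w \<delta> C = (case C of (K, enc, dec) \<Rightarrow>
      (\<forall>rs ew. restricted_write N \<rho>w ew \<longrightarrow>
        (\<forall>m<K. measure_pmf.prob (enc m)
           {c. dec (\<lambda>i. c i + ew (adv_view rs (read_budget \<rho>r N) c) i) \<noteq> m} \<le> \<delta>)))"

definition awtp_code :: "nat \<Rightarrow> real \<Rightarrow> real \<Rightarrow> real \<Rightarrow> real \<Rightarrow> ('a::{zero,plus}) awtp_code \<Rightarrow> bool" where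
  "awtp_code N \<rho>r \<rho>w \<epsilon> \<delta> C =
     (awtp_valid N C \<and> awtp_secure N \<rho>r \<epsilon> C \<and> awtp_reliable N \<rho>r \<rho>w \<delta> C)"

definition awtp_rate :: "nat \<Rightarrow> ('a::finite) awtp_code \<Rightarrow> real" where
  "awtp_rate N C = ln (real (fst C)) / (real N * ln (real CARD('a)))"

definition awtp_achievable :: "('a::{finite,ab_group_add}) itself \<Rightarrow> real \<Rightarrow> real \<Rightarrow> real \<Rightarrow> real \<Rightarrow> bool" where
  "awtp_achievable T \<rho>r \<rho>w \<epsilon> R = (\<exists>F :: nat \<Rightarrow> 'a awtp_code.
      (\<forall>N. \<exists>\<delta>. awtp_code N \<rho>r \<rho>w \<epsilon> \<delta> (F N)) \<and>
      (\<forall>\<xi>>0. \<exists>N0. \<forall>N\<ge>N0. awtp_rate N (F N) \<ge> R - \<xi> \<and> awtp_code N \<rho>r \<rho>w \<epsilon> \<xi> (F N)))"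

definition awtp_capacity :: "('a::{finite,ab_group_add}) itself \<Rightarrow> real \<Rightarrow> real \<Rightarrow> real \<Rightarrow> ereal" where
  "awtp_capacity T \<rho>r \<rho>w \<epsilon> = Sup (ereal ` {R. awtp_achievable T \<rho>r \<rho>w \<epsilon> R})"

end

theory Submission
  imports Defs
begin

(* The restricted adversary may read the first w = \<lfloor>\<rho>w N\<rfloor> symbols and
  overwrite them with zeros, so the message must be decodable from the remaining symbols.
  Security against the reader of the next t = \<lfloor>\<rho>r N\<rfloor> symbols makes that block almost
  independent of the message, and once the block is fixed the decoded message is a function of
  the last N - t - w symbols. Averaging over the block gives K (1 - \<delta> - \<epsilon>) \<le> |\<Sigma>|^(N-t-w),
  so every \<epsilon> < 1 already forces rate \<le> 1 - \<rho>r - \<rho>w. *)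

definition block_reader :: "nat \<Rightarrow> nat \<Rightarrow> (nat \<times> 'a) list \<Rightarrow> nat option" where
  "block_reader s n v = (if length v < n then Some (s + length v) else None)"

lemma adv_run_block_reader:
  assumes "j \<le> n"
  shows "adv_run (block_reader s n) k c (map (\<lambda>i. (i, c i)) [s..<s + j])
      = map (\<lambda>i. (i, c i)) [s..<s + min n (j + k)]"
  using assms
proof (induction k arbitrary: j)
  case 0
  then show ?case by simp
next
  case (Suc k)
  show ?case
  proof (cases "j < n")
    case True
    then have "adv_run (block_reader s n) (Suc k) c (map (\<lambda>i. (i, c i)) [s..<s + j])
        = adv_run (block_reader s n) k c (map (\<lambda>i. (i, c i)) [s..<s + Suc j])"
      by (simp add: block_reader_def)
    also have "\<dots> = map (\<lambda>i. (i, c i)) [s..<s + min n (Suc j + k)]"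
      using Suc.IH[of "Suc j"] True by simp
    finally show ?thesis by simp
  next
    case False
    with Suc.prems show ?thesis by (simp add: block_reader_def)
  qed
qed

lemma adv_view_block_reader:
  "n \<le> k \<Longrightarrow> adv_view (block_reader s n) k c = map (\<lambda>i. (i, c i)) [s..<s + n]"
  unfolding adv_view_def using adv_run_block_reader[of 0 n s k c] by simp

lemma adv_view_block_reader_eqD:
  assumes "n \<le> k" and "adv_view (block_reader s n) k c = adv_view (block_reader s n) k c'"
    and "i \<in> {s..<s + n}"
  shows "c i = c' i"
  using assms by (simp add: adv_view_block_reader)

lemma finite_words: "finite (words N :: (nat \<Rightarrow> 'a::{finite,zero}) set)"
proof -
  have "words N \<subseteq> (\<lambda>f i. if i \<in> {1..N} then f i else 0) ` (PiE {1..N} (\<lambda>_. UNIV::'a set))"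
  proof
    fix c :: "nat \<Rightarrow> 'a" assume "c \<in> words N"
    then have "c = (\<lambda>i. if i \<in> {1..N} then restrict c {1..N} i else 0)"
      by (auto simp: words_def)
    then show "c \<in> (\<lambda>f i. if i \<in> {1..N} then f i else 0) ` (PiE {1..N} (\<lambda>_. UNIV))"
      by (intro image_eqI[where x = "restrict c {1..N}"]) auto
  qed
  moreover have "finite (PiE {1..N} (\<lambda>_. UNIV::'a set))" by (intro finite_PiE) auto
  ultimately show ?thesis by (meson finite_imageI finite_subset)
qed

lemma prob_diff_le_stat_dist:
  "\<bar>measure_pmf.prob p A - measure_pmf.prob q A\<bar> \<le> stat_dist p q"
  unfolding stat_dist_def
proof (rule cSUP_upper)
  have "\<bar>measure_pmf.prob p B - measure_pmf.prob q B\<bar> \<le> 1" for B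
    using measure_pmf.prob_le_1[of p B] measure_pmf.prob_le_1[of q B]
    by (smt (verit) measure_nonneg)
  then show "bdd_above (range (\<lambda>B. \<bar>measure_pmf.prob p B - measure_pmf.prob q B\<bar>))"
    by (intro bdd_aboveI2)
qed simp

lemma sum_prob_le_overlap:
  fixes p :: "'b pmf" and H :: "'i \<Rightarrow> 'b set"
  assumes "finite M" and "\<And>x. card {m \<in> M. x \<in> H m} \<le> Q"
  shows "(\<Sum>m\<in>M. measure_pmf.prob p (H m)) \<le> Q"
proof -
  have "(\<Sum>m\<in>M. measure_pmf.prob p (H m)) = (\<Sum>m\<in>M. measure_pmf.expectation p (indicator (H m)))"
    by simp
  also have "\<dots> = measure_pmf.expectation p (\<lambda>x. \<Sum>m\<in>M. indicator (H m) x)"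
    by (subst Bochner_Integration.integral_sum)
      (auto intro: measure_pmf.integrable_const_bound[where B = 1])
  also have "\<dots> = measure_pmf.expectation p (\<lambda>x. real (card {m \<in> M. x \<in> H m}))"
    using assms(1) by (simp add: indicator_def sum.If_cases Int_def conj_commute)
  also have "\<dots> \<le> measure_pmf.expectation p (\<lambda>x. real Q)"
    using assms(2)
    by (intro integral_mono) (auto intro: measure_pmf.integrable_const_bound[where B = Q])
  finally show ?thesis by simp
qed

lemma card_image_le_if_factors:
  assumes "\<And>x y. x \<in> S \<Longrightarrow> y \<in> S \<Longrightarrow> g x = g y \<Longrightarrow> f x = f y" and "finite (g ` S)"
  shows "card (f ` S) \<le> card (g ` S)"
proof -
  have "f (inv_into S g (g x)) = f x" if "x \<in> S" for x
    using that by (intro assms(1) inv_into_into f_inv_into_f) (auto intro: imageI)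
  then have "f ` S = (\<lambda>y. f (inv_into S g y)) ` g ` S"
    by (simp add: image_image cong: image_cong)
  then show ?thesis using card_image_le[OF assms(2)] by metis
qed

definition erase_prefix :: "nat \<Rightarrow> (nat \<Rightarrow> 'a::zero) \<Rightarrow> nat \<Rightarrow> 'a" where
  "erase_prefix w c i = (if i \<in> {1..w} then 0 else c i)"

lemma erase_prefix_eqI:
  assumes "c \<in> words N" "c' \<in> words N" and "\<And>i. i \<in> {w<..N} \<Longrightarrow> c i = c' i"
  shows "erase_prefix w c = erase_prefix w c'"
proof
  fix i
  show "erase_prefix w c i = erase_prefix w c' i"
  proof (cases "i \<in> {w<..N}")
    case True
    with assms(3) show ?thesis by (simp add: erase_prefix_def)
  next
    case False
    with assms(1,2) show ?thesis by (auto simp: erase_prefix_def words_def)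
  qed
qed

lemma card_decoded_messages_le:
  fixes dec :: "(nat \<Rightarrow> 'a::{finite,zero}) \<Rightarrow> nat"
  assumes "w + t \<le> N"
  shows "card ((\<lambda>c. dec (erase_prefix w c)) `
           {c \<in> words N. adv_view (block_reader (w + 1) t) t c = v}) \<le> CARD('a) ^ (N - t - w)"
proof -
  let ?S = "{c \<in> words N. adv_view (block_reader (w + 1) t) t c = v}"
  let ?A = "{w + t<..N}"
  have "card ((\<lambda>c. dec (erase_prefix w c)) ` ?S) \<le> card ((\<lambda>c. restrict c ?A) ` ?S)"
  proof (rule card_image_le_if_factors)
    fix c c' assume c: "c \<in> ?S" and c': "c' \<in> ?S" and eq: "restrict c ?A = restrict c' ?A"
    have "c i = c' i" if "i \<in> {w<..N}" for i
    proof (cases "i \<le> w + t")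
      case True
      with that c c' show ?thesis by (intro adv_view_block_reader_eqD[of t t "w + 1" c c']) auto
    next
      case False
      with that show ?thesis using fun_cong[OF eq, of i] by simp
    qed
    with c c' show "dec (erase_prefix w c) = dec (erase_prefix w c')"
      using erase_prefix_eqI by (metis (no_types, lifting) mem_Collect_eq)
  qed (auto intro: finite_subset[OF _ finite_PiE[of ?A "\<lambda>_. UNIV :: 'a set"]])
  also have "\<dots> \<le> card (PiE ?A (\<lambda>_. UNIV :: 'a set))"
    by (intro card_mono finite_PiE) auto
  also have "\<dots> = CARD('a) ^ (N - t - w)"
    by (simp add: card_PiE add.commute)
  finally show ?thesis .
qed

lemma erasure_secrecy_bound:
  fixes enc :: "nat \<Rightarrow> (nat \<Rightarrow> 'a::{finite,zero}) pmf" and dec :: "(nat \<Rightarrow> 'a) \<Rightarrow> nat"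
    and w t N :: nat
  defines "view \<equiv> adv_view (block_reader (w + 1) t) t"
  assumes "w + t \<le> N"
    and supp: "\<And>m. m < K \<Longrightarrow> set_pmf (enc m) \<subseteq> words N"
    and secure: "\<And>m. m < K \<Longrightarrow> stat_dist (map_pmf view (enc m)) (map_pmf view p) \<le> \<epsilon>"
    and decodes: "\<And>m. m < K \<Longrightarrow> measure_pmf.prob (enc m) {c. dec (erase_prefix w c) \<noteq> m} \<le> \<delta>"
  shows "real K * (1 - \<delta> - \<epsilon>) \<le> CARD('a) ^ (N - t - w)"
proof -
  define G where "G m = {c \<in> words N. dec (erase_prefix w c) = m}" for m
  define H where "H m = view -` view ` G m" for m
  have decoded: "1 - \<delta> \<le> measure_pmf.prob (enc m) (G m)" if "m < K" for m
  proof -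
    have "set_pmf (enc m) \<inter> - G m \<subseteq> {c. dec (erase_prefix w c) \<noteq> m}"
      using supp[OF that] by (auto simp: G_def)
    then have "measure_pmf.prob (enc m) (- G m)
        \<le> measure_pmf.prob (enc m) {c. dec (erase_prefix w c) \<noteq> m}"
      by (subst measure_Int_set_pmf[symmetric]) (intro measure_pmf.finite_measure_mono, auto)
    with decodes[OF that] measure_pmf.prob_compl[of "G m" "enc m"] show ?thesis
      by (simp add: Compl_eq_Diff_UNIV)
  qed
  have indistinguishable: "measure_pmf.prob (enc m) (G m) \<le> measure_pmf.prob p (H m) + \<epsilon>"
    if "m < K" for m
  proof -
    have "measure_pmf.prob (enc m) (G m) \<le> measure_pmf.prob (enc m) (H m)"
      by (intro measure_pmf.finite_measure_mono) (auto simp: H_def)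
    moreover have "measure_pmf.prob (enc m) (H m) - measure_pmf.prob p (H m) \<le> \<epsilon>"
      using prob_diff_le_stat_dist[of "map_pmf view (enc m)" "view ` G m" "map_pmf view p"]
        secure[OF that] by (simp add: H_def)
    ultimately show ?thesis by simp
  qed
  have overlap: "card {m \<in> {..<K}. x \<in> H m} \<le> CARD('a) ^ (N - t - w)" for x
  proof -
    have "{m \<in> {..<K}. x \<in> H m} \<subseteq> (\<lambda>c. dec (erase_prefix w c)) ` {c \<in> words N. view c = view x}"
      by (auto simp: H_def G_def)
    then have "card {m \<in> {..<K}. x \<in> H m}
        \<le> card ((\<lambda>c. dec (erase_prefix w c)) ` {c \<in> words N. view c = view x})"
      by (intro card_mono finite_imageI) (auto intro: finite_subset[OF _ finite_words])
    also have "\<dots> \<le> CARD('a) ^ (N - t - w)"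
      unfolding view_def by (rule card_decoded_messages_le) fact
    finally show ?thesis .
  qed
  have "real K * (1 - \<delta>) = (\<Sum>m<K. 1 - \<delta>)" by simp
  also have "\<dots> \<le> (\<Sum>m<K. measure_pmf.prob p (H m) + \<epsilon>)"
    using decoded indistinguishable by (intro sum_mono) (meson lessThan_iff order_trans)
  also have "\<dots> \<le> CARD('a) ^ (N - t - w) + real K * \<epsilon>"
    using sum_prob_le_overlap[of "{..<K}" H, OF _ overlap] by (simp add: sum.distrib)
  finally show ?thesis by (simp add: algebra_simps)
qed

definition erasure_error :: "nat \<Rightarrow> (nat \<times> 'a) list \<Rightarrow> nat \<Rightarrow> 'a::ab_group_add" where
  "erasure_error w v i = (if i \<in> {1..w} then (case map_of v i of Some a \<Rightarrow> - a | None \<Rightarrow> 0) else 0)"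

lemma restricted_write_erasure_error:
  assumes "w \<le> N" and "real w \<le> \<rho>w * real N"
  shows "restricted_write N \<rho>w (erasure_error w)"
  unfolding restricted_write_def
proof (intro allI conjI)
  fix v :: "(nat \<times> 'a) list"
  have supp: "{i. erasure_error w v i \<noteq> 0} \<subseteq> {1..w}"
    by (auto simp: erasure_error_def split: if_splits)
  show "{i. erasure_error w v i \<noteq> 0} \<subseteq> fst ` set v \<inter> {1..N}"
  proof
    fix i assume i: "i \<in> {i. erasure_error w v i \<noteq> 0}"
    then obtain a where "map_of v i = Some a"
      by (auto simp: erasure_error_def split: if_splits option.splits)
    then have "i \<in> fst ` set v" by (metis map_of_SomeD fst_conv image_eqI)
    with i supp \<open>w \<le> N\<close> show "i \<in> fst ` set v \<inter> {1..N}" by auto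
  qed
  have "card {i. erasure_error w v i \<noteq> 0} \<le> w"
    using card_mono[OF _ supp] by simp
  with assms(2) show "real (card {i. erasure_error w v i \<noteq> 0}) \<le> \<rho>w * real N"
    by linarith
qed

lemma add_erasure_error_eq_erase_prefix:
  assumes "w \<le> k"
  shows "c i + erasure_error w (adv_view (block_reader 1 w) k c) i = erase_prefix w c i"
  using assms by (auto simp: adv_view_block_reader map_of_map_restrict erasure_error_def
      erase_prefix_def restrict_map_def simp del: upt_Suc)

lemma awtp_code_size_bound:
  fixes enc :: "nat \<Rightarrow> (nat \<Rightarrow> 'a::{finite,ab_group_add}) pmf"
  assumes code: "awtp_code N \<rho>r \<rho>w \<epsilon> \<delta> (K, enc, dec)"
    and "0 \<le> \<rho>w" "\<rho>w \<le> \<rho>r" "\<rho>r + \<rho>w \<le> 1"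
  shows "real K * (1 - \<delta> - \<epsilon>) \<le> CARD('a) ^ (N - read_budget \<rho>r N - nat \<lfloor>\<rho>w * real N\<rfloor>)"
proof -
  define t where "t = read_budget \<rho>r N"
  define w where "w = nat \<lfloor>\<rho>w * real N\<rfloor>"
  have w_le: "real w \<le> \<rho>w * real N" and t_le: "real t \<le> \<rho>r * real N"
    using assms(2,3) by (simp_all add: w_def t_def read_budget_def)
  have "w \<le> t"
    unfolding w_def t_def read_budget_def
    using assms(2,3) by (intro nat_mono floor_mono mult_right_mono) auto
  have "real (w + t) \<le> (\<rho>r + \<rho>w) * real N"
    using w_le t_le by (simp add: algebra_simps)
  also have "\<dots> \<le> real N"
    using assms(4) mult_right_mono[of "\<rho>r + \<rho>w" 1 "real N"] by simp
  finally have "w + t \<le> N" by simp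
  from code have supp: "\<And>m. m < K \<Longrightarrow> set_pmf (enc m) \<subseteq> words N"
    and secure: "\<And>m. m < K \<Longrightarrow> stat_dist (map_pmf (adv_view (block_reader (w + 1) t) t) (enc m))
                    (map_pmf (adv_view (block_reader (w + 1) t) t) (enc 0)) \<le> \<epsilon>"
    by (auto simp: awtp_code_def awtp_valid_def awtp_secure_def t_def)
  have "restricted_write N \<rho>w (erasure_error w :: _ \<Rightarrow> _ \<Rightarrow> 'a)"
    using \<open>w + t \<le> N\<close> w_le by (intro restricted_write_erasure_error) auto
  with code have "measure_pmf.prob (enc m)
      {c. dec (\<lambda>i. c i + erasure_error w (adv_view (block_reader 1 w) t c) i) \<noteq> m} \<le> \<delta>"
    if "m < K" for m
    using that unfolding awtp_code_def awtp_reliable_def t_def by auto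
  then have decodes: "measure_pmf.prob (enc m) {c. dec (erase_prefix w c) \<noteq> m} \<le> \<delta>"
    if "m < K" for m
    using that unfolding add_erasure_error_eq_erase_prefix[OF \<open>w \<le> t\<close>] by blast
  have "real K * (1 - \<delta> - \<epsilon>) \<le> CARD('a) ^ (N - t - w)"
    by (rule erasure_secrecy_bound[where enc = enc and dec = dec and p = "enc 0"])
      (use \<open>w + t \<le> N\<close> supp secure decodes in auto)
  then show ?thesis by (simp add: t_def w_def)
qed

lemma awtp_rate_le:
  fixes C :: "'a::{finite,ab_group_add} awtp_code"
  assumes code: "awtp_code N \<rho>r \<rho>w \<epsilon> \<delta> C"
    and \<rho>: "0 \<le> \<rho>w" "\<rho>w \<le> \<rho>r" "\<rho>r + \<rho>w \<le> 1"
    and c: "0 < c" "c \<le> 1" "c \<le> 1 - \<delta> - \<epsilon>" and "0 < N"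
  shows "awtp_rate N C \<le> 1 - \<rho>r - \<rho>w + (2 - log 2 c) / N"
proof -
  obtain K enc dec where C: "C = (K, enc, dec)" by (metis prod_cases3)
  define n where "n = N - read_budget \<rho>r N - nat \<lfloor>\<rho>w * real N\<rfloor>"
  define q where "q = real CARD('a)"
  have "\<rho>r * real N - 1 \<le> real (read_budget \<rho>r N)" "\<rho>w * real N - 1 \<le> real (nat \<lfloor>\<rho>w * real N\<rfloor>)"
    using \<rho> by (simp_all add: read_budget_def)
  moreover have "0 \<le> real N * (1 - \<rho>r - \<rho>w)"
    using \<rho> by simp
  ultimately have n_le: "real n \<le> real N * (1 - \<rho>r - \<rho>w) + 2"
    unfolding n_def by (simp add: algebra_simps)
  have "K \<ge> 1"
    using code C by (simp add: awtp_code_def awtp_valid_def)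
  have Kc: "real K * c \<le> q ^ n"
    using awtp_code_size_bound[OF code[unfolded C] \<rho>] c \<open>K \<ge> 1\<close>
    by (simp add: n_def q_def) (smt (verit) mult_left_mono of_nat_0_le_iff)
  have "log 2 c \<le> 0" using c by simp
  show ?thesis
  proof (cases "CARD('a) = 1")
    case True
    \<comment> \<open>the rate divides by ln 1 = 0 and is therefore 0\<close>
    with \<open>log 2 c \<le> 0\<close> \<rho> \<open>0 < N\<close> show ?thesis
      by (simp add: awtp_rate_def q_def C)
  next
    case False
    then have "CARD('a) \<ge> 2"
      using finite_UNIV_card_ge_0[OF finite[of "UNIV :: 'a set"]] by linarith
    then have "q \<ge> 2" by (simp add: q_def)
    have "log q (real K) + log q c = log q (real K * c)"
      using \<open>K \<ge> 1\<close> c \<open>q \<ge> 2\<close> by (simp add: log_mult)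
    also have "\<dots> \<le> log q (q ^ n)"
      using Kc \<open>K \<ge> 1\<close> c \<open>q \<ge> 2\<close> by (subst log_le_cancel_iff) auto
    also have "\<dots> = n"
      using \<open>q \<ge> 2\<close> by (simp add: log_nat_power)
    finally have "log q (real K) \<le> n - log q c" by simp
    moreover have "log 2 c \<le> log q c"
      using \<open>q \<ge> 2\<close> c \<open>log 2 c \<le> 0\<close> by (simp add: log_def divide_left_mono_neg)
    ultimately have "log q (real K) \<le> real N * (1 - \<rho>r - \<rho>w) + (2 - log 2 c)"
      using n_le by linarith
    then have "log q (real K) / N \<le> (real N * (1 - \<rho>r - \<rho>w) + (2 - log 2 c)) / N"
      by (intro divide_right_mono) auto
    also have "\<dots> = 1 - \<rho>r - \<rho>w + (2 - log 2 c) / N"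
      using \<open>0 < N\<close> by (simp add: add_divide_distrib)
    finally show ?thesis
      by (simp add: awtp_rate_def C q_def log_def mult.commute)
  qed
qed

lemma awtp_achievable_le:
  assumes ach: "awtp_achievable TYPE('a::{finite,ab_group_add}) \<rho>r \<rho>w \<epsilon> R"
    and \<rho>: "0 \<le> \<rho>w" "\<rho>w \<le> \<rho>r" "\<rho>r + \<rho>w \<le> 1" and "0 \<le> \<epsilon>" "\<epsilon> < 1"
  shows "R \<le> 1 - \<rho>r - \<rho>w"
proof (rule field_le_epsilon)
  fix e :: real assume "0 < e"
  define c where "c = (1 - \<epsilon>) / 2"
  define \<xi> where "\<xi> = min (e / 2) c"
  have c: "0 < c" "c \<le> 1" and "0 < \<xi>" "\<xi> \<le> e / 2" "c \<le> 1 - \<xi> - \<epsilon>"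
    using \<open>0 < e\<close> \<open>0 \<le> \<epsilon>\<close> \<open>\<epsilon> < 1\<close> by (auto simp: c_def \<xi>_def min_def field_simps)
  obtain F :: "nat \<Rightarrow> 'a awtp_code" and N0 where
    F: "\<And>N. N \<ge> N0 \<Longrightarrow> R - \<xi> \<le> awtp_rate N (F N) \<and> awtp_code N \<rho>r \<rho>w \<epsilon> \<xi> (F N)"
    using ach \<open>0 < \<xi>\<close> unfolding awtp_achievable_def by blast
  define D where "D = 2 - log 2 c"
  have "log 2 c \<le> 0" using c by simp
  then have "0 < D" by (simp add: D_def)
  obtain n :: nat where n: "D / \<xi> < n" using reals_Archimedean2 by blast
  define N where "N = max N0 n"
  have "0 < n" using n \<open>0 < D\<close> \<open>0 < \<xi>\<close>
    by (metis divide_pos_pos of_nat_0_less_iff order.strict_trans)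
  then have "0 < N" "n \<le> N" by (auto simp: N_def)
  have "D / N \<le> D / n"
    using \<open>0 < D\<close> \<open>0 < n\<close> \<open>n \<le> N\<close> by (simp add: frac_le)
  also have "\<dots> < \<xi>"
    using n \<open>0 < \<xi>\<close> \<open>0 < n\<close> by (simp add: divide_less_eq mult.commute)
  finally have "D / N < \<xi>" .
  have "R - \<xi> \<le> awtp_rate N (F N)"
    using F[of N] by (simp add: N_def)
  also have "\<dots> \<le> 1 - \<rho>r - \<rho>w + D / N"
    unfolding D_def using F[of N]
    by (intro awtp_rate_le[OF _ \<rho> c \<open>c \<le> 1 - \<xi> - \<epsilon>\<close> \<open>0 < N\<close>]) (simp add: N_def)
  finally show "R \<le> 1 - \<rho>r - \<rho>w + e"
    using \<open>D / N < \<xi>\<close> \<open>\<xi> \<le> e / 2\<close> by linarith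
qed

lemma awtp_capacity_le:
  assumes "0 \<le> \<rho>w" "\<rho>w \<le> \<rho>r" "\<rho>r + \<rho>w \<le> 1" and "0 \<le> \<epsilon>" "\<epsilon> < 1"
  shows "awtp_capacity TYPE('a::{finite,ab_group_add}) \<rho>r \<rho>w \<epsilon> \<le> ereal (1 - \<rho>r - \<rho>w)"
  unfolding awtp_capacity_def
  by (rule Sup_least) (auto dest: awtp_achievable_le[OF _ assms])

theorem mainTheorem5:
  fixes \<rho>r \<rho>w :: real
  assumes "0 \<le> \<rho>w" and "\<rho>w \<le> \<rho>r" and "\<rho>r + \<rho>w \<le> 1"
  shows "awtp_capacity TYPE('a::{finite,ab_group_add}) \<rho>r \<rho>w 0 \<le> ereal (1 - \<rho>r - \<rho>w)
    \<and> (\<exists>\<epsilon>0>0. \<forall>\<epsilon>. 0 < \<epsilon> \<and> \<epsilon> < \<epsilon>0 \<longrightarrow>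
         awtp_capacity TYPE('a) \<rho>r \<rho>w \<epsilon>
           \<le> ereal (1 - \<rho>r - \<rho>w + 2 * \<epsilon> * \<rho>r * (1 + log (real CARD('a)) (1 / \<epsilon>))))"
proof (intro conjI exI[of _ "1 :: real"] allI impI)
  show "awtp_capacity TYPE('a) \<rho>r \<rho>w 0 \<le> ereal (1 - \<rho>r - \<rho>w)"
    by (rule awtp_capacity_le[OF assms]) simp_all
next
  fix \<epsilon> :: real
  assume \<epsilon>: "0 < \<epsilon> \<and> \<epsilon> < 1"
  have "0 \<le> log (real CARD('a)) (1 / \<epsilon>)"
    using \<epsilon> by (simp add: log_def zero_le_divide_iff)
  then have "0 \<le> 2 * \<epsilon> * \<rho>r * (1 + log (real CARD('a)) (1 / \<epsilon>))"
    using \<epsilon> assms by simp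
  then show "awtp_capacity TYPE('a) \<rho>r \<rho>w \<epsilon>
      \<le> ereal (1 - \<rho>r - \<rho>w + 2 * \<epsilon> * \<rho>r * (1 + log (real CARD('a)) (1 / \<epsilon>)))"
    using awtp_capacity_le[OF assms, of \<epsilon>] \<epsilon> by (auto elim!: order_trans)
qed simp

end
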